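(* Let $R$ be an integral domain whose Jacobson radical is $\{0\}$, let $X=\operatorname{Specm}(R)$ and for $r\in R$ let $X_r=\{\mathfrak m\in X : r\notin\mathfrak m\}$. Then $\mathcal F=\{Z\subseteq X : X_r\subseteq Z \text{ for some } r\in R\setminus\{0\}\}$ is a filter on $X$. Moreover, if $\mathcal U$ is an ultrafilter on $X$ containing $\mathcal F$, then the canonical map $R\to\prod_{\mathcal U}R/\mathfrak m$ is injective, and the field $\prod_{\mathcal U}R/\mathfrak m$ contains (a copy of) the fraction field of $R$.
   Context: A filter on a set $X$ is a collection $\mathcal F$ of subsets of $X$ with $\emptyset\notin\mathcal F$, closed under finite intersections and under passing to supersets; an ultrafilter is a maximal filter. For a nonempty filter $\mathcal F$ on $X$ and commutative rings $S_i$ ($i\in X$), $\prod_{\mathcal F}S_i$ is the quotient of $\prod_{i\in X}S_i$ by the ideal of families $(s_i)$ with $\{i : s_i=0\}\in\mathcal F$; if all $S_i$ are fields and $\mathcal F$ is an ultrafilter this is a field. The canonical map $R\to\prod_{\mathcal U}R/\mathfrak m$ sends $r$ to the class of $(r \bmod \mathfrak m)_{\mathfrak m\in X}$. *)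

theory Defs
  imports "HOL-Algebra.QuotRing" "HOL-Computational_Algebra.Fraction_Field"
begin

definition tc_ring :: "('a::comm_ring_1) ring" where
  "tc_ring = \<lparr>carrier = UNIV, mult = (*), one = 1, zero = 0, add = (+)\<rparr>"

definition Specm :: "('a, 'b) ring_scheme \<Rightarrow> 'a set set" where
  "Specm R = {m. maximalideal m R}"

definition jacobson_radical :: "('a, 'b) ring_scheme \<Rightarrow> 'a set" where
  "jacobson_radical R = carrier R \<inter> \<Inter> (Specm R)"

definition is_filter_on :: "'i set \<Rightarrow> 'i set set \<Rightarrow> bool" where
  "is_filter_on X F \<longleftrightarrow>
     F \<subseteq> Pow X \<and> {} \<notin> F \<and> X \<in> F \<and>
     (\<forall>A\<in>F. \<forall>B\<in>F. A \<inter> B \<in> F) \<and>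
     (\<forall>A\<in>F. \<forall>B. A \<subseteq> B \<and> B \<subseteq> X \<longrightarrow> B \<in> F)"

definition is_ultrafilter_on :: "'i set \<Rightarrow> 'i set set \<Rightarrow> bool" where
  "is_ultrafilter_on X U \<longleftrightarrow>
     is_filter_on X U \<and> (\<forall>G. is_filter_on X G \<and> U \<subseteq> G \<longrightarrow> G = U)"

text \<open>Reduced product of rings S i (i in X) along a filter F: the quotient of the
  product ring by the ideal of families vanishing on a set in F; two families are
  identified iff they agree on a set belonging to F.\<close>
definition ultra_rel :: "('i \<Rightarrow> ('b, 'c) ring_scheme) \<Rightarrow> 'i set \<Rightarrow> 'i set set \<Rightarrow> (('i \<Rightarrow> 'b) \<times> ('i \<Rightarrow> 'b)) set" where
  "ultra_rel S X F = {(f, g). f \<in> (\<Pi>\<^sub>E i\<in>X. carrier (S i)) \<and> g \<in> (\<Pi>\<^sub>E i\<in>X. carrier (S i)) \<and>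
                              {i \<in> X. f i = g i} \<in> F}"

definition ultra_class :: "('i \<Rightarrow> ('b, 'c) ring_scheme) \<Rightarrow> 'i set \<Rightarrow> 'i set set \<Rightarrow> ('i \<Rightarrow> 'b) \<Rightarrow> ('i \<Rightarrow> 'b) set" where
  "ultra_class S X F f = ultra_rel S X F `` {f}"

definition ultraprod :: "('i \<Rightarrow> ('b, 'c) ring_scheme) \<Rightarrow> 'i set \<Rightarrow> 'i set set \<Rightarrow> ('i \<Rightarrow> 'b) set ring" where
  "ultraprod S X F = \<lparr>
     carrier = (\<Pi>\<^sub>E i\<in>X. carrier (S i)) // ultra_rel S X F,
     mult = (\<lambda>A B. \<Union>f\<in>A. \<Union>g\<in>B. ultra_class S X F (\<lambda>i\<in>X. f i \<otimes>\<^bsub>S i\<^esub> g i)),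
     one = ultra_class S X F (\<lambda>i\<in>X. \<one>\<^bsub>S i\<^esub>),
     zero = ultra_class S X F (\<lambda>i\<in>X. \<zero>\<^bsub>S i\<^esub>),
     add = (\<lambda>A B. \<Union>f\<in>A. \<Union>g\<in>B. ultra_class S X F (\<lambda>i\<in>X. f i \<oplus>\<^bsub>S i\<^esub> g i)) \<rparr>"

end

theory Submission
  imports Defs
begin

text \<open>Because the Jacobson radical vanishes, every basic open set X_r with r \<noteq> 0 is nonempty,
  and X_(rs) = X_r \<inter> X_s since maximal ideals are prime; as R is a domain, the sets X_r with
  r \<noteq> 0 therefore form a filter base. The reduced product of the fields R/m is a homomorphic
  image of the product ring, hence a commutative ring, and along an ultrafilter a family that is
  nonzero on a large set can be inverted there, so it is a field. If r \<noteq> s had the same image,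
  r - s would lie in almost every m, while X_(r-s) is also large; hence the canonical map is
  injective, and an injective homomorphism from a domain into a field extends to its fraction
  field by a/b \<mapsto> \<phi>(a)/\<phi>(b).\<close>

section \<open>Filters and ultrafilters\<close>

lemma
  assumes "is_filter_on X F"
  shows is_filter_on_top: "X \<in> F"
    and is_filter_on_not_empty: "{} \<notin> F"
    and is_filter_on_subset: "A \<in> F \<Longrightarrow> A \<subseteq> X"
    and is_filter_on_Int: "A \<in> F \<Longrightarrow> B \<in> F \<Longrightarrow> A \<inter> B \<in> F"
    and is_filter_on_mono: "A \<in> F \<Longrightarrow> A \<subseteq> B \<Longrightarrow> B \<subseteq> X \<Longrightarrow> B \<in> F"
  using assms unfolding is_filter_on_def by blast+

lemma is_ultrafilter_on_Diff:
  assumes ultra: "is_ultrafilter_on X U" and "A \<subseteq> X" "A \<notin> U"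
  shows "X - A \<in> U"
proof (rule ccontr)
  assume "X - A \<notin> U"
  have filter: "is_filter_on X U"
    using ultra by (simp add: is_ultrafilter_on_def)
  have meets_A: "u \<inter> A \<noteq> {}" if "u \<in> U" for u
  proof
    assume "u \<inter> A = {}"
    then have "u \<subseteq> X - A"
      using is_filter_on_subset[OF filter \<open>u \<in> U\<close>] by blast
    then show False
      using is_filter_on_mono[OF filter \<open>u \<in> U\<close>] \<open>X - A \<notin> U\<close> by blast
  qed
  define G where "G = {B. B \<subseteq> X \<and> (\<exists>u\<in>U. u \<inter> A \<subseteq> B)}"
  have "is_filter_on X G"
    unfolding is_filter_on_def
  proof (intro conjI ballI allI impI)
    show "G \<subseteq> Pow X" "X \<in> G"
      unfolding G_def using is_filter_on_top[OF filter] by auto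
    show "{} \<notin> G"
      unfolding G_def using meets_A by blast
  next
    fix B1 B2 assume "B1 \<in> G" "B2 \<in> G"
    then obtain u1 u2 where "u1 \<in> U" "u2 \<in> U" "u1 \<inter> A \<subseteq> B1" "u2 \<inter> A \<subseteq> B2" "B1 \<subseteq> X"
      unfolding G_def by blast
    then show "B1 \<inter> B2 \<in> G"
      unfolding G_def using is_filter_on_Int[OF filter, of u1 u2] by blast
  qed (auto simp: G_def)
  moreover have "U \<subseteq> G"
    unfolding G_def using is_filter_on_subset[OF filter] by blast
  ultimately have "G = U"
    using ultra by (simp add: is_ultrafilter_on_def)
  moreover have "A \<in> G"
    unfolding G_def using is_filter_on_top[OF filter] \<open>A \<subseteq> X\<close> by blast
  ultimately show False
    using \<open>A \<notin> U\<close> by blast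
qed

section \<open>Reduced products of rings\<close>

definition prod_ring :: "('i \<Rightarrow> ('b, 'c) ring_scheme) \<Rightarrow> 'i set \<Rightarrow> ('i \<Rightarrow> 'b) ring" where
  "prod_ring S X = \<lparr>carrier = (\<Pi>\<^sub>E i\<in>X. carrier (S i)),
     mult = (\<lambda>f g. \<lambda>i\<in>X. f i \<otimes>\<^bsub>S i\<^esub> g i), one = (\<lambda>i\<in>X. \<one>\<^bsub>S i\<^esub>),
     zero = (\<lambda>i\<in>X. \<zero>\<^bsub>S i\<^esub>), add = (\<lambda>f g. \<lambda>i\<in>X. f i \<oplus>\<^bsub>S i\<^esub> g i)\<rparr>"

lemma cring_prod_ring:
  assumes cring: "\<And>i. i \<in> X \<Longrightarrow> cring (S i)"
  shows "cring (prod_ring S X)"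
proof -
  note pointwise = cring.cring_simprules[OF cring]
    monoid.r_one[OF ring.is_monoid[OF cring.axioms(1)[OF cring]]]
  show ?thesis
  proof (rule cringI[OF abelian_groupI comm_monoidI])
    fix x assume "x \<in> carrier (prod_ring S X)"
    then show "\<exists>y\<in>carrier (prod_ring S X). y \<oplus>\<^bsub>prod_ring S X\<^esub> x = \<zero>\<^bsub>prod_ring S X\<^esub>"
      by (intro bexI[of _ "\<lambda>i\<in>X. \<ominus>\<^bsub>S i\<^esub> x i"]) (auto simp: prod_ring_def PiE_iff pointwise)
  qed (auto simp: prod_ring_def PiE_iff extensional_def fun_eq_iff pointwise)
qed

locale reduced_product =
  fixes S :: "'i \<Rightarrow> ('b, 'c) ring_scheme" and X :: "'i set" and U :: "'i set set"
  assumes filter: "is_filter_on X U" and cring: "\<And>i. i \<in> X \<Longrightarrow> cring (S i)"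
begin

abbreviation "Pi_S \<equiv> prod_ring S X"
abbreviation "Red \<equiv> ultraprod S X U"
abbreviation "cls \<equiv> ultra_class S X U"

lemma cring_Pi_S: "cring Pi_S"
  using cring by (rule cring_prod_ring)

lemma equiv_ultra_rel: "equiv (carrier Pi_S) (ultra_rel S X U)"
proof (rule equivI)
  show "ultra_rel S X U \<subseteq> carrier Pi_S \<times> carrier Pi_S"
    unfolding ultra_rel_def prod_ring_def by auto
  show "refl_on (carrier Pi_S) (ultra_rel S X U)"
    unfolding refl_on_def ultra_rel_def prod_ring_def using is_filter_on_top[OF filter] by auto
  show "sym (ultra_rel S X U)"
    unfolding sym_def ultra_rel_def by (auto simp: eq_commute)
  show "trans (ultra_rel S X U)"
    unfolding trans_def ultra_rel_def
  proof clarsimp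
    fix f g h
    assume "{i \<in> X. f i = g i} \<in> U" "{i \<in> X. g i = h i} \<in> U"
    then have "{i \<in> X. f i = g i} \<inter> {i \<in> X. g i = h i} \<in> U"
      by (rule is_filter_on_Int[OF filter])
    then show "{i \<in> X. f i = h i} \<in> U"
      by (rule is_filter_on_mono[OF filter]) auto
  qed
qed

lemma ultra_class_eq_iff:
  "f \<in> carrier Pi_S \<Longrightarrow> g \<in> carrier Pi_S \<Longrightarrow> cls f = cls g \<longleftrightarrow> {i \<in> X. f i = g i} \<in> U"
  unfolding ultra_class_def using eq_equiv_class_iff[OF equiv_ultra_rel]
  by (auto simp: ultra_rel_def prod_ring_def)

lemma ultra_class_self: "f \<in> carrier Pi_S \<Longrightarrow> f \<in> cls f"
  using is_filter_on_top[OF filter] by (simp add: ultra_class_def ultra_rel_def prod_ring_def)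

lemma carrier_ultraprod: "carrier Red = cls ` carrier Pi_S"
  by (auto simp: ultraprod_def prod_ring_def ultra_class_def quotient_def)

lemma ultra_class_pointwise_op:
  assumes closed: "\<And>i x y. i \<in> X \<Longrightarrow> x \<in> carrier (S i) \<Longrightarrow> y \<in> carrier (S i) \<Longrightarrow>
      op i x y \<in> carrier (S i)"
    and f: "f \<in> carrier Pi_S" and g: "g \<in> carrier Pi_S"
  shows "(\<Union>f'\<in>cls f. \<Union>g'\<in>cls g. cls (\<lambda>i\<in>X. op i (f' i) (g' i))) = cls (\<lambda>i\<in>X. op i (f i) (g i))"
proof -
  have "cls (\<lambda>i\<in>X. op i (f' i) (g' i)) = cls (\<lambda>i\<in>X. op i (f i) (g i))"
    if "f' \<in> cls f" "g' \<in> cls g" for f' g'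
  proof -
    from that have f': "f' \<in> carrier Pi_S" "{i \<in> X. f i = f' i} \<in> U"
      and g': "g' \<in> carrier Pi_S" "{i \<in> X. g i = g' i} \<in> U"
      by (auto simp: ultra_class_def ultra_rel_def prod_ring_def)
    have "{i \<in> X. f i = f' i} \<inter> {i \<in> X. g i = g' i} \<in> U"
      using f'(2) g'(2) by (rule is_filter_on_Int[OF filter])
    then have "{i \<in> X. (\<lambda>i\<in>X. op i (f' i) (g' i)) i = (\<lambda>i\<in>X. op i (f i) (g i)) i} \<in> U"
      by (rule is_filter_on_mono[OF filter]) auto
    moreover have "(\<lambda>i\<in>X. op i (f' i) (g' i)) \<in> carrier Pi_S" "(\<lambda>i\<in>X. op i (f i) (g i)) \<in> carrier Pi_S"
      using f g f'(1) g'(1) by (auto simp: prod_ring_def PiE_iff intro!: closed)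
    ultimately show ?thesis
      using ultra_class_eq_iff by blast
  qed
  then show ?thesis
    using ultra_class_self[OF f] ultra_class_self[OF g] by blast
qed

lemma ultra_class_mult:
  "f \<in> carrier Pi_S \<Longrightarrow> g \<in> carrier Pi_S \<Longrightarrow> cls f \<otimes>\<^bsub>Red\<^esub> cls g = cls (f \<otimes>\<^bsub>Pi_S\<^esub> g)"
  using ultra_class_pointwise_op[of "\<lambda>i x y. x \<otimes>\<^bsub>S i\<^esub> y"]
  by (simp add: ultraprod_def prod_ring_def cring.cring_simprules[OF cring])

lemma ultra_class_add:
  "f \<in> carrier Pi_S \<Longrightarrow> g \<in> carrier Pi_S \<Longrightarrow> cls f \<oplus>\<^bsub>Red\<^esub> cls g = cls (f \<oplus>\<^bsub>Pi_S\<^esub> g)"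
  using ultra_class_pointwise_op[of "\<lambda>i x y. x \<oplus>\<^bsub>S i\<^esub> y"]
  by (simp add: ultraprod_def prod_ring_def cring.cring_simprules[OF cring])

lemma ultra_class_one: "cls \<one>\<^bsub>Pi_S\<^esub> = \<one>\<^bsub>Red\<^esub>"
  and ultra_class_zero: "cls \<zero>\<^bsub>Pi_S\<^esub> = \<zero>\<^bsub>Red\<^esub>"
  by (simp_all add: ultraprod_def prod_ring_def)

lemma ultra_class_eq_zero_iff:
  assumes "f \<in> carrier Pi_S"
  shows "cls f = \<zero>\<^bsub>Red\<^esub> \<longleftrightarrow> {i \<in> X. f i = \<zero>\<^bsub>S i\<^esub>} \<in> U"
proof -
  have "\<zero>\<^bsub>Pi_S\<^esub> \<in> carrier Pi_S"
    using cring_Pi_S by (simp add: cring.cring_simprules)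
  moreover have "{i \<in> X. f i = \<zero>\<^bsub>Pi_S\<^esub> i} = {i \<in> X. f i = \<zero>\<^bsub>S i\<^esub>}"
    by (auto simp: prod_ring_def)
  ultimately show ?thesis
    using ultra_class_eq_iff[OF assms] by (simp add: ultra_class_zero[symmetric])
qed

lemma ultra_class_ring_hom: "cls \<in> ring_hom Pi_S Red"
  by (rule ring_hom_memI) (simp_all add: carrier_ultraprod ultra_class_mult ultra_class_add ultra_class_one)

lemma cring_ultraprod: "cring Red"
proof -
  interpret Pi_S: cring Pi_S
    by (rule cring_Pi_S)
  have "ring (Red\<lparr>carrier := cls ` carrier Pi_S, zero := cls \<zero>\<^bsub>Pi_S\<^esub>\<rparr>)"
    by (rule Pi_S.ring_hom_imp_img_ring[OF ultra_class_ring_hom])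
  moreover have "comm_monoid (Red\<lparr>carrier := cls ` carrier Pi_S, one := cls \<one>\<^bsub>Pi_S\<^esub>\<rparr>)"
    by (rule Pi_S.hom_imp_img_comm_monoid) (use ultra_class_ring_hom in \<open>simp add: ring_hom_def hom_def\<close>)
  ultimately show ?thesis
    by (simp add: carrier_ultraprod[symmetric] ultra_class_one ultra_class_zero cring_def)
qed

lemma diagonal_ring_hom_ultraprod:
  assumes "\<And>i. i \<in> X \<Longrightarrow> \<phi> i \<in> ring_hom R (S i)"
  shows "(\<lambda>r. cls (\<lambda>i\<in>X. \<phi> i r)) \<in> ring_hom R Red"
proof -
  have "(\<lambda>r. \<lambda>i\<in>X. \<phi> i r) \<in> ring_hom R Pi_S"
    using assms by (intro ring_hom_memI) (auto simp: prod_ring_def ring_hom_mult ring_hom_add ring_hom_one intro: ring_hom_closed)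
  from ring_hom_trans[OF this ultra_class_ring_hom] show ?thesis
    by (simp add: comp_def)
qed

end

lemma (in reduced_product) ultra_class_invertible:
  assumes field: "\<And>i. i \<in> X \<Longrightarrow> field (S i)"
    and f: "f \<in> carrier Pi_S" and support: "{i \<in> X. f i \<noteq> \<zero>\<^bsub>S i\<^esub>} \<in> U"
  shows "\<exists>g\<in>carrier Pi_S. cls f \<otimes>\<^bsub>Red\<^esub> cls g = \<one>\<^bsub>Red\<^esub>"
proof -
  have unit: "f i \<in> Units (S i)" if "i \<in> X" "f i \<noteq> \<zero>\<^bsub>S i\<^esub>" for i
    using field[OF \<open>i \<in> X\<close>] f that by (auto simp: field.field_Units prod_ring_def)
  define g where "g = (\<lambda>i\<in>X. if f i = \<zero>\<^bsub>S i\<^esub> then \<one>\<^bsub>S i\<^esub> else inv\<^bsub>S i\<^esub> f i)"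
  have g: "g \<in> carrier Pi_S"
    using unit cring
    by (auto simp: g_def prod_ring_def cring.cring_simprules monoid.Units_inv_closed cring_def ring.is_monoid)
  have "{i \<in> X. f i \<noteq> \<zero>\<^bsub>S i\<^esub>} \<subseteq> {i \<in> X. (f \<otimes>\<^bsub>Pi_S\<^esub> g) i = \<one>\<^bsub>Pi_S\<^esub> i}"
    using unit cring by (auto simp: g_def prod_ring_def monoid.Units_r_inv cring_def ring.is_monoid)
  then have "{i \<in> X. (f \<otimes>\<^bsub>Pi_S\<^esub> g) i = \<one>\<^bsub>Pi_S\<^esub> i} \<in> U"
    by (rule is_filter_on_mono[OF filter support]) auto
  then have "cls f \<otimes>\<^bsub>Red\<^esub> cls g = \<one>\<^bsub>Red\<^esub>"
    using f g cring_Pi_S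
    by (simp add: ultra_class_mult ultra_class_eq_iff cring.cring_simprules flip: ultra_class_one)
  with g show ?thesis
    by blast
qed

lemma field_ultraprod:
  assumes ultra: "is_ultrafilter_on X U" and field: "\<And>i. i \<in> X \<Longrightarrow> field (S i)"
  shows "field (ultraprod S X U)"
proof -
  interpret reduced_product S X U
    using ultra field by (intro reduced_product.intro) (auto simp: is_ultrafilter_on_def fieldE(1))
  interpret Red: cring Red
    by (rule cring_ultraprod)
  show ?thesis
  proof (rule Red.cring_fieldI2)
    have zero_in: "\<zero>\<^bsub>Pi_S\<^esub> \<in> carrier Pi_S" and one_in: "\<one>\<^bsub>Pi_S\<^esub> \<in> carrier Pi_S"
      using cring_Pi_S by (simp_all add: cring.cring_simprules)
    have "{i \<in> X. \<zero>\<^bsub>Pi_S\<^esub> i = \<one>\<^bsub>Pi_S\<^esub> i} = {}"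
      using field fieldE(2) by (fastforce simp: prod_ring_def)
    then show "\<zero>\<^bsub>Red\<^esub> \<noteq> \<one>\<^bsub>Red\<^esub>"
      using ultra_class_eq_iff[OF zero_in one_in] is_filter_on_not_empty[OF filter]
        ultra_class_zero ultra_class_one by metis
  next
    fix a assume "a \<in> carrier Red" "a \<noteq> \<zero>\<^bsub>Red\<^esub>"
    obtain f where f: "f \<in> carrier Pi_S" "a = cls f"
      using \<open>a \<in> carrier Red\<close> carrier_ultraprod by auto
    with \<open>a \<noteq> \<zero>\<^bsub>Red\<^esub>\<close> have "{i \<in> X. f i = \<zero>\<^bsub>S i\<^esub>} \<notin> U"
      using ultra_class_eq_zero_iff by blast
    then have "X - {i \<in> X. f i = \<zero>\<^bsub>S i\<^esub>} \<in> U"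
      by (intro is_ultrafilter_on_Diff[OF ultra]) auto
    moreover have "X - {i \<in> X. f i = \<zero>\<^bsub>S i\<^esub>} = {i \<in> X. f i \<noteq> \<zero>\<^bsub>S i\<^esub>}"
      by blast
    ultimately show "\<exists>b\<in>carrier Red. a \<otimes>\<^bsub>Red\<^esub> b = \<one>\<^bsub>Red\<^esub>"
      using ultra_class_invertible[OF field f(1)] f(2) carrier_ultraprod by auto
  qed
qed

section \<open>Embedding the fraction field\<close>

lemma tc_ring_simps [simp]:
  "carrier tc_ring = UNIV" "mult tc_ring = (*)" "one tc_ring = 1" "zero tc_ring = 0" "add tc_ring = (+)"
  by (simp_all add: tc_ring_def)

lemma cring_tc_ring: "cring (tc_ring :: 'a::comm_ring_1 ring)"
proof (rule cringI)
  show "abelian_group (tc_ring :: 'a ring)"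
    by (rule abelian_groupI) (auto simp: algebra_simps intro: exI[of _ "- x" for x])
  show "comm_monoid (tc_ring :: 'a ring)"
    by (rule comm_monoidI) (auto simp: algebra_simps)
qed (simp add: algebra_simps)

lemma domain_tc_ring: "domain (tc_ring :: 'a::idom ring)"
  using cring_tc_ring by (intro domain.intro domain_axioms.intro) auto

locale fract_lift = field K for K :: "'b ring" (structure) +
  fixes \<phi> :: "'a::idom \<Rightarrow> 'b"
  assumes hom: "\<phi> \<in> ring_hom tc_ring K" and inj: "inj \<phi>"
begin

lemma phi_closed: "\<phi> x \<in> carrier K"
  and phi_mult: "\<phi> (x * y) = \<phi> x \<otimes> \<phi> y"
  and phi_add: "\<phi> (x + y) = \<phi> x \<oplus> \<phi> y"
  and phi_one: "\<phi> 1 = \<one>"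
  using ring_hom_closed[OF hom] ring_hom_mult[OF hom] ring_hom_add[OF hom] ring_hom_one[OF hom]
  by simp_all

lemma phi_nonzero: "b \<noteq> 0 \<Longrightarrow> \<phi> b \<noteq> \<zero>"
  using ring_hom_zero[OF hom cring.axioms(1)[OF cring_tc_ring] ring_axioms] inj
  by (metis injD tc_ring_simps(4))

text \<open>The value at a/b is characterised by the equation y \<otimes> \<phi> b = \<phi> a rather than as
  \<phi> a \<otimes> inv \<phi> b, which keeps the homomorphism proofs free of inverses.\<close>

definition lift :: "'a fract \<Rightarrow> 'b" where
  "lift x = (SOME y. y \<in> carrier K \<and> (\<exists>a b. b \<noteq> 0 \<and> x = Fract a b \<and> y \<otimes> \<phi> b = \<phi> a))"

lemma quotient_solution_unique:
  "b \<noteq> 0 \<Longrightarrow> y \<in> carrier K \<Longrightarrow> z \<in> carrier K \<Longrightarrow> y \<otimes> \<phi> b = \<phi> a \<Longrightarrow> z \<otimes> \<phi> b = \<phi> a \<Longrightarrow> y = z"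
  using m_rcancel[OF phi_nonzero phi_closed] by metis

lemma quotient_solution_Fract_cong:
  assumes "b \<noteq> 0" "d \<noteq> 0" "Fract a b = Fract c d" and y: "y \<in> carrier K" "y \<otimes> \<phi> d = \<phi> c"
  shows "y \<otimes> \<phi> b = \<phi> a"
proof -
  have "a * d = c * b"
    using assms(3) eq_fract(1)[OF assms(1,2)] by simp
  have "(y \<otimes> \<phi> b) \<otimes> \<phi> d = (y \<otimes> \<phi> d) \<otimes> \<phi> b"
    using y(1) phi_closed by (simp add: m_ac)
  also have "\<dots> = \<phi> a \<otimes> \<phi> d"
    using y(2) \<open>a * d = c * b\<close> by (metis phi_mult)
  finally show ?thesis
    using m_rcancel[OF phi_nonzero[OF assms(2)]] y(1) phi_closed by simp
qed

lemma lift_Fract: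
  assumes "b \<noteq> 0"
  shows "lift (Fract a b) \<in> carrier K" and "lift (Fract a b) \<otimes> \<phi> b = \<phi> a"
proof -
  have "\<phi> b \<in> Units K"
    using field_Units phi_nonzero[OF assms] phi_closed by simp
  then have "\<phi> a \<otimes> inv \<phi> b \<in> carrier K" "\<phi> a \<otimes> inv \<phi> b \<otimes> \<phi> b = \<phi> a"
    using phi_closed by (simp_all add: m_assoc)
  then have "\<exists>y. y \<in> carrier K \<and> (\<exists>a' b'. b' \<noteq> 0 \<and> Fract a b = Fract a' b' \<and> y \<otimes> \<phi> b' = \<phi> a')"
    using assms by blast
  then have "lift (Fract a b) \<in> carrier K \<and>
      (\<exists>a' b'. b' \<noteq> 0 \<and> Fract a b = Fract a' b' \<and> lift (Fract a b) \<otimes> \<phi> b' = \<phi> a')"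
    unfolding lift_def by (rule someI_ex)
  then show "lift (Fract a b) \<in> carrier K" "lift (Fract a b) \<otimes> \<phi> b = \<phi> a"
    using quotient_solution_Fract_cong[OF assms] by blast+
qed

lemma lift_Fract_eqI: "b \<noteq> 0 \<Longrightarrow> y \<in> carrier K \<Longrightarrow> y \<otimes> \<phi> b = \<phi> a \<Longrightarrow> lift (Fract a b) = y"
  using quotient_solution_unique lift_Fract by blast

lemma lift_closed: "lift x \<in> carrier K"
  by (cases x) (simp add: lift_Fract)

lemma lift_ring_hom: "lift \<in> ring_hom tc_ring K"
proof (rule ring_hom_memI)
  fix x y :: "'a fract"
  obtain a b c d where x: "x = Fract a b" "b \<noteq> 0" and y: "y = Fract c d" "d \<noteq> 0"
    by (cases x, cases y)
  note lx = lift_Fract[OF x(2), of a, folded x(1)] and ly = lift_Fract[OF y(2), of c, folded y(1)]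
  have "lift (Fract (a * c) (b * d)) = lift x \<otimes> lift y"
  proof (rule lift_Fract_eqI)
    have "(lift x \<otimes> lift y) \<otimes> \<phi> (b * d) = (lift x \<otimes> \<phi> b) \<otimes> (lift y \<otimes> \<phi> d)"
      using lift_closed phi_closed by (simp add: phi_mult m_ac)
    also have "\<dots> = \<phi> (a * c)"
      using lx ly by (simp add: phi_mult)
    finally show "(lift x \<otimes> lift y) \<otimes> \<phi> (b * d) = \<phi> (a * c)" .
  qed (use x y lx ly in simp_all)
  then show "lift (x \<otimes>\<^bsub>tc_ring\<^esub> y) = lift x \<otimes> lift y"
    using x y by simp
  have "lift (Fract (a * d + c * b) (b * d)) = lift x \<oplus> lift y"
  proof (rule lift_Fract_eqI)
    have "(lift x \<oplus> lift y) \<otimes> \<phi> (b * d) = (lift x \<otimes> \<phi> b) \<otimes> \<phi> d \<oplus> (lift y \<otimes> \<phi> d) \<otimes> \<phi> b"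
      using lift_closed phi_closed by (simp add: phi_mult l_distr r_distr m_ac)
    also have "\<dots> = \<phi> (a * d + c * b)"
      using lx ly by (simp add: phi_mult phi_add)
    finally show "(lift x \<oplus> lift y) \<otimes> \<phi> (b * d) = \<phi> (a * d + c * b)" .
  qed (use x y lx ly in simp_all)
  then show "lift (x \<oplus>\<^bsub>tc_ring\<^esub> y) = lift x \<oplus> lift y"
    using x y by simp
qed (simp_all add: lift_closed One_fract_def lift_Fract_eqI phi_one)

lemma lift_Fract_1: "lift (Fract r 1) = \<phi> r"
  by (rule lift_Fract_eqI) (simp_all add: phi_closed phi_one)

lemma inj_lift: "inj lift"
proof (rule injI)
  fix x y :: "'a fract" assume "lift x = lift y"
  obtain a b c d where x: "x = Fract a b" "b \<noteq> 0" and y: "y = Fract c d" "d \<noteq> 0"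
    by (cases x, cases y)
  note lx = lift_Fract[OF x(2), of a, folded x(1)] and ly = lift_Fract[OF y(2), of c, folded y(1)]
  have "\<phi> (a * d) = (lift x \<otimes> \<phi> b) \<otimes> \<phi> d"
    using lx by (simp add: phi_mult)
  also have "\<dots> = (lift y \<otimes> \<phi> d) \<otimes> \<phi> b"
    using \<open>lift x = lift y\<close> lift_closed phi_closed by (simp add: m_ac)
  also have "\<dots> = \<phi> (c * b)"
    using ly by (simp add: phi_mult)
  finally show "x = y"
    using x y inj by (simp add: inj_eq eq_fract)
qed

end

lemma field_contains_fract:
  fixes \<phi> :: "'a::idom \<Rightarrow> 'b" and K :: "'b ring"
  assumes "field K" "\<phi> \<in> ring_hom tc_ring K" "inj \<phi>"
  shows "\<exists>h. h \<in> ring_hom (tc_ring :: 'a fract ring) K \<and> inj h \<and> (\<forall>r. h (Fract r 1) = \<phi> r)"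
proof -
  interpret fract_lift K \<phi>
    using assms by (simp add: fract_lift_def fract_lift_axioms_def)
  show ?thesis
    using lift_ring_hom inj_lift lift_Fract_1 by blast
qed

section \<open>The maximal spectrum\<close>

lemma (in cring) Specm_basic_open_mult:
  assumes "r \<in> carrier R" "s \<in> carrier R"
  shows "{m \<in> Specm R. r \<otimes> s \<notin> m} = {m \<in> Specm R. r \<notin> m} \<inter> {m \<in> Specm R. s \<notin> m}"
proof -
  have "r \<otimes> s \<in> m \<longleftrightarrow> r \<in> m \<or> s \<in> m" if "m \<in> Specm R" for m
  proof -
    interpret primeideal m R
      using that maximalideal_prime by (simp add: Specm_def)
    show ?thesis
    proof
      assume "r \<otimes> s \<in> m"
      then show "r \<in> m \<or> s \<in> m"
        using I_prime assms by blast
    next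
      assume "r \<in> m \<or> s \<in> m"
      then show "r \<otimes> s \<in> m"
        using I_r_closed I_l_closed assms by blast
    qed
  qed
  then show ?thesis
    by blast
qed

lemma (in cring) Specm_basic_open_nonempty:
  assumes "jacobson_radical R = {\<zero>}" "r \<in> carrier R" "r \<noteq> \<zero>"
  shows "{m \<in> Specm R. r \<notin> m} \<noteq> {}"
proof -
  have "r \<notin> jacobson_radical R"
    using assms(1,3) by simp
  then show ?thesis
    using assms(2) by (auto simp: jacobson_radical_def)
qed

lemma (in domain) is_filter_on_Specm:
  assumes "jacobson_radical R = {\<zero>}"
  shows "is_filter_on (Specm R) {Z. Z \<subseteq> Specm R \<and> (\<exists>r \<in> carrier R - {\<zero>}. {m \<in> Specm R. r \<notin> m} \<subseteq> Z)}"
    (is "is_filter_on _ ?F")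
  unfolding is_filter_on_def
proof (intro conjI ballI allI impI)
  show "?F \<subseteq> Pow (Specm R)"
    by blast
  show "{} \<notin> ?F"
    using Specm_basic_open_nonempty[OF assms] by auto
  show "Specm R \<in> ?F"
    using one_not_zero by auto
next
  fix A B assume "A \<in> ?F" "B \<in> ?F"
  then obtain r s where "A \<subseteq> Specm R" and r: "r \<in> carrier R - {\<zero>}" "{m \<in> Specm R. r \<notin> m} \<subseteq> A"
    and s: "s \<in> carrier R - {\<zero>}" "{m \<in> Specm R. s \<notin> m} \<subseteq> B"
    by auto
  have "r \<otimes> s \<in> carrier R - {\<zero>}"
    using r(1) s(1) integral_iff by auto
  moreover have "{m \<in> Specm R. r \<otimes> s \<notin> m} \<subseteq> A \<inter> B"
    using r s Specm_basic_open_mult[of r s] by auto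
  ultimately show "A \<inter> B \<in> ?F"
    using \<open>A \<subseteq> Specm R\<close> by blast
next
  fix A B assume "A \<in> ?F" "A \<subseteq> B \<and> B \<subseteq> Specm R"
  then show "B \<in> ?F"
    by blast
qed

lemma (in cring) reduced_product_Specm:
  "is_filter_on (Specm R) U \<Longrightarrow> reduced_product (\<lambda>m. R Quot m) (Specm R) U"
  by (simp add: reduced_product_def Specm_def ideal.quotient_is_cring maximalideal.axioms(1) is_cring)

lemma (in cring) field_ultraprod_Specm:
  "is_ultrafilter_on (Specm R) U \<Longrightarrow> field (ultraprod (\<lambda>m. R Quot m) (Specm R) U)"
  by (rule field_ultraprod) (simp_all add: Specm_def maximalideal.quotient_is_field is_cring)

lemma (in cring) ring_hom_canonical_ultraprod:
  assumes "is_filter_on (Specm R) U"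
  shows "(\<lambda>r. ultra_class (\<lambda>m. R Quot m) (Specm R) U (\<lambda>m\<in>Specm R. m +> r))
    \<in> ring_hom R (ultraprod (\<lambda>m. R Quot m) (Specm R) U)"
  using reduced_product_Specm[OF assms]
  by (rule reduced_product.diagonal_ring_hom_ultraprod)
    (simp add: Specm_def ideal.rcos_ring_hom maximalideal.axioms(1))

lemma (in cring) canonical_ultraprod_eq_iff:
  assumes filter: "is_filter_on (Specm R) U" and r: "r \<in> carrier R" and s: "s \<in> carrier R"
  shows "ultra_class (\<lambda>m. R Quot m) (Specm R) U (\<lambda>m\<in>Specm R. m +> r) =
      ultra_class (\<lambda>m. R Quot m) (Specm R) U (\<lambda>m\<in>Specm R. m +> s) \<longleftrightarrow>
    {m \<in> Specm R. r \<ominus> s \<in> m} \<in> U"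
proof -
  interpret reduced_product "\<lambda>m. R Quot m" "Specm R" U
    using filter by (rule reduced_product_Specm)
  have ideal: "ideal m R" if "m \<in> Specm R" for m
    using that by (simp add: Specm_def maximalideal.axioms(1))
  have "m +> r \<in> carrier (R Quot m)" if "m \<in> Specm R" "r \<in> carrier R" for m r
    using ring_hom_closed[OF ideal.rcos_ring_hom[OF ideal[OF that(1)]] that(2)] .
  then have rep: "(\<lambda>m\<in>Specm R. m +> r) \<in> carrier Pi_S" if "r \<in> carrier R" for r
    using that by (auto simp: prod_ring_def)
  have "{m \<in> Specm R. m +> r = m +> s} = {m \<in> Specm R. r \<ominus> s \<in> m}"
    using quotient_eq_iff_same_a_r_cos[OF ideal r s] by blast
  then show ?thesis
    using ultra_class_eq_iff[OF rep[OF r] rep[OF s]] by (simp cong: conj_cong)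
qed

lemma (in cring) inj_on_canonical_ultraprod:
  assumes filter: "is_filter_on (Specm R) U"
    and basic_open: "\<And>r. r \<in> carrier R - {\<zero>} \<Longrightarrow> {m \<in> Specm R. r \<notin> m} \<in> U"
  shows "inj_on (\<lambda>r. ultra_class (\<lambda>m. R Quot m) (Specm R) U (\<lambda>m\<in>Specm R. m +> r)) (carrier R)"
proof (rule inj_onI, rule ccontr)
  fix r s assume r: "r \<in> carrier R" and s: "s \<in> carrier R" and "r \<noteq> s"
    and "ultra_class (\<lambda>m. R Quot m) (Specm R) U (\<lambda>m\<in>Specm R. m +> r) =
      ultra_class (\<lambda>m. R Quot m) (Specm R) U (\<lambda>m\<in>Specm R. m +> s)"
  then have in_U: "{m \<in> Specm R. r \<ominus> s \<in> m} \<in> U"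
    using canonical_ultraprod_eq_iff[OF filter r s] by blast
  have "r = (r \<ominus> s) \<oplus> s"
    using r s by algebra
  then have "r \<ominus> s \<noteq> \<zero>"
    using \<open>r \<noteq> s\<close> s by auto
  then have "{m \<in> Specm R. r \<ominus> s \<notin> m} \<in> U"
    using r s by (intro basic_open) simp
  with in_U have "{m \<in> Specm R. r \<ominus> s \<in> m} \<inter> {m \<in> Specm R. r \<ominus> s \<notin> m} \<in> U"
    by (rule is_filter_on_Int[OF filter])
  moreover have "{m \<in> Specm R. r \<ominus> s \<in> m} \<inter> {m \<in> Specm R. r \<ominus> s \<notin> m} = {}"
    by blast
  ultimately show False
    using is_filter_on_not_empty[OF filter] by simp
qed

theorem proposition1p1:
  fixes R :: "('a::idom) ring" and X :: "'a set set" and Xr :: "'a \<Rightarrow> 'a set set"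
    and F :: "'a set set set"
  assumes "R = tc_ring"
    and "jacobson_radical R = {\<zero>\<^bsub>R\<^esub>}"
    and "X = Specm R"
    and "\<And>r. Xr r = {m \<in> X. r \<notin> m}"
    and "F = {Z. Z \<subseteq> X \<and> (\<exists>r \<in> carrier R - {\<zero>\<^bsub>R\<^esub>}. Xr r \<subseteq> Z)}"
  shows "is_filter_on X F \<and>
    (\<forall>U. is_ultrafilter_on X U \<and> F \<subseteq> U \<longrightarrow>
       (let P = ultraprod (\<lambda>m. R Quot m) X U;
            can = (\<lambda>r. ultra_class (\<lambda>m. R Quot m) X U (\<lambda>m\<in>X. m +>\<^bsub>R\<^esub> r))
        in field P \<and> can \<in> ring_hom R P \<and> inj_on can (carrier R) \<and>
           (\<exists>h. h \<in> ring_hom (tc_ring :: 'a fract ring) P \<and> inj h \<and>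
                (\<forall>r \<in> carrier R. h (Fract r 1) = can r))))"
proof -
  interpret R: domain R
    using assms(1) domain_tc_ring by simp
  have F_filter: "is_filter_on X F"
    using R.is_filter_on_Specm[OF assms(2)] by (simp add: assms(3-5))
  have "field P \<and> can \<in> ring_hom R P \<and> inj_on can (carrier R) \<and>
      (\<exists>h. h \<in> ring_hom (tc_ring :: 'a fract ring) P \<and> inj h \<and> (\<forall>r \<in> carrier R. h (Fract r 1) = can r))"
    if "is_ultrafilter_on X U" "F \<subseteq> U"
      and "P = ultraprod (\<lambda>m. R Quot m) X U"
      and "can = (\<lambda>r. ultra_class (\<lambda>m. R Quot m) X U (\<lambda>m\<in>X. m +>\<^bsub>R\<^esub> r))" for U P can
  proof -
    have U_filter: "is_filter_on (Specm R) U"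
      using that(1) assms(3) by (simp add: is_ultrafilter_on_def)
    have field: "field P"
      using R.field_ultraprod_Specm that(1,3) assms(3) by simp
    have hom: "can \<in> ring_hom R P"
      using R.ring_hom_canonical_ultraprod[OF U_filter] that(3,4) assms(3) by simp
    have "{m \<in> Specm R. r \<notin> m} \<in> U" if "r \<in> carrier R - {\<zero>\<^bsub>R\<^esub>}" for r
      using that \<open>F \<subseteq> U\<close> by (auto simp: assms(3-5))
    then have inj: "inj_on can (carrier R)"
      using R.inj_on_canonical_ultraprod[OF U_filter] that(4) assms(3) by simp
    have "\<exists>h. h \<in> ring_hom (tc_ring :: 'a fract ring) P \<and> inj h \<and> (\<forall>r. h (Fract r 1) = can r)"
      using field hom inj assms(1) by (intro field_contains_fract) simp_all
    with field hom inj show ?thesis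
      by blast
  qed
  with F_filter show ?thesis
    by (simp add: Let_def)
qed

end
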